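(* Let $\Theta=\begin{pmatrix} a&c\\ b&d\end{pmatrix}\in GL(2,\mathbb{Z})$ have no eigenvalue of absolute value $1$, with $\det\Theta=1$. Let $\Delta_1=\det(\Theta-I_2)$. Let $M$ be the mapping torus of the self-homeomorphism of $T^2$ induced by $\Theta$, with $\pi=\pi_1(M)\cong\langle t,x,y\mid txt^{-1}=x^ay^b,\ tyt^{-1}=x^cy^d,\ xy=yx\rangle$, and let $\rho:\pi\to\mathbb{Z}/2\mathbb{Z}$ be the epimorphism with $\rho(t)=1$, $\rho(x)=\rho(y)=0$. If $\Delta_1\equiv 4\pmod 8$ and $\Theta\equiv -I_2\pmod 4$, then $BU(M,\phi)=2$ for every epimorphism $\phi:\pi\to\mathbb{Z}/2\mathbb{Z}$ with $\phi\neq\rho$.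
   Context: For a closed manifold $N$ and an epimorphism $\phi:\pi_1(N)\to\mathbb{Z}/2\mathbb{Z}$, let $N_\phi$ be the associated double cover with covering involution $t_\phi$. The Borsuk–Ulam index $BU(N,\phi)$ is the largest $k$ such that for every continuous map $f:N_\phi\to\mathbb{R}^k$ there is $x\in N_\phi$ with $f(x)=f(t_\phi(x))$. *)

theory Defs
  imports "HOL-Analysis.Analysis" "HOL-Algebra.Elementary_Groups" "HOL-Number_Theory.Cong"
begin

text \<open>The matrix Theta = [[a,c],[b,d]] acting on column vectors (u,v),
 i.e. Theta e1 = (a,b), Theta e2 = (c,d); and the adjugate (its inverse when det = 1).\<close>

definition thmap :: "int \<Rightarrow> int \<Rightarrow> int \<Rightarrow> int \<Rightarrow> 'r::comm_ring_1 \<times> 'r \<Rightarrow> 'r \<times> 'r" where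
  "thmap a b c d p = (of_int a * fst p + of_int c * snd p, of_int b * fst p + of_int d * snd p)"

definition thinv :: "int \<Rightarrow> int \<Rightarrow> int \<Rightarrow> int \<Rightarrow> 'r::comm_ring_1 \<times> 'r \<Rightarrow> 'r \<times> 'r" where
  "thinv a b c d p = (of_int d * fst p - of_int c * snd p, - of_int b * fst p + of_int a * snd p)"

definition thpow :: "int \<Rightarrow> int \<Rightarrow> int \<Rightarrow> int \<Rightarrow> int \<Rightarrow> 'r::comm_ring_1 \<times> 'r \<Rightarrow> 'r \<times> 'r" where
  "thpow a b c d n = (if 0 \<le> n then thmap a b c d ^^ nat n else thinv a b c d ^^ nat (- n))"

text \<open>pi = Z^2 \<rtimes>_Theta Z; the element ((m1,m2),n) stands for x^m1 y^m2 t^n.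
 Thus x = ((1,0),0), y = ((0,1),0), t = ((0,0),1), and t x t^-1 = x^a y^b, t y t^-1 = x^c y^d.\<close>
definition pi_grp :: "int \<Rightarrow> int \<Rightarrow> int \<Rightarrow> int \<Rightarrow> ((int \<times> int) \<times> int) monoid" where
  "pi_grp a b c d = \<lparr> carrier = UNIV,
     mult = (\<lambda>g h. (fst g + thpow a b c d (snd g) (fst h), snd g + snd h)),
     one = ((0, 0), 0) \<rparr>"

text \<open>Deck action of pi on the universal cover R^2 x R of the mapping torus M:
 ((m,n)) acts by (v,s) |-> (Theta^n v + m, s + n).  M = (R^2 x R)/pi.\<close>
definition deck_act :: "int \<Rightarrow> int \<Rightarrow> int \<Rightarrow> int \<Rightarrow> (int \<times> int) \<times> int
     \<Rightarrow> (real \<times> real) \<times> real \<Rightarrow> (real \<times> real) \<times> real" where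
  "deck_act a b c d g p = (thpow a b c d (snd g) (fst p) + (of_int (fst (fst g)), of_int (snd (fst g))),
                           snd p + of_int (snd g))"

abbreviation Z2 :: "int monoid" where "Z2 \<equiv> integer_mod_group 2"

definition quotient_top :: "'a topology \<Rightarrow> ('a \<Rightarrow> 'b) \<Rightarrow> 'b topology" where
  "quotient_top X q = topology (\<lambda>U. U \<subseteq> q ` topspace X \<and> openin X {x \<in> topspace X. q x \<in> U})"

text \<open>Double cover N_phi = (R^2 x R)/ker phi: points are ker phi - orbits.\<close>
definition cover_proj :: "int \<Rightarrow> int \<Rightarrow> int \<Rightarrow> int \<Rightarrow> ((int \<times> int) \<times> int \<Rightarrow> int)
     \<Rightarrow> (real \<times> real) \<times> real \<Rightarrow> ((real \<times> real) \<times> real) set" where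
  "cover_proj a b c d \<phi> p = {deck_act a b c d g p | g. \<phi> g = 0}"

definition double_cover :: "int \<Rightarrow> int \<Rightarrow> int \<Rightarrow> int \<Rightarrow> ((int \<times> int) \<times> int \<Rightarrow> int)
     \<Rightarrow> ((real \<times> real) \<times> real) set topology" where
  "double_cover a b c d \<phi> = quotient_top euclidean (cover_proj a b c d \<phi>)"

definition cover_invol :: "int \<Rightarrow> int \<Rightarrow> int \<Rightarrow> int \<Rightarrow> ((int \<times> int) \<times> int \<Rightarrow> int)
     \<Rightarrow> ((real \<times> real) \<times> real) set \<Rightarrow> ((real \<times> real) \<times> real) set" where
  "cover_invol a b c d \<phi> Orb = {deck_act a b c d g p | g p. \<phi> g = 1 \<and> p \<in> Orb}"

definition BU_prop :: "'x topology \<Rightarrow> ('x \<Rightarrow> 'x) \<Rightarrow> nat \<Rightarrow> bool" where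
  "BU_prop X \<tau> k \<longleftrightarrow> (\<forall>f. continuous_map X (Euclidean_space k) f \<longrightarrow>
      (\<exists>x\<in>topspace X. f x = f (\<tau> x)))"

definition BU_index :: "'x topology \<Rightarrow> ('x \<Rightarrow> 'x) \<Rightarrow> nat" where
  "BU_index X \<tau> = (GREATEST k. BU_prop X \<tau> k)"

definition BU_torus :: "int \<Rightarrow> int \<Rightarrow> int \<Rightarrow> int \<Rightarrow> ((int \<times> int) \<times> int \<Rightarrow> int) \<Rightarrow> nat" where
  "BU_torus a b c d \<phi> = BU_index (double_cover a b c d \<phi>) (cover_invol a b c d \<phi>)"

end

theory Submission
  imports Defs
begin

text \<open>
  A map \<open>f\<close> from the double cover to \<open>\<real>\<^sup>2\<close> without coincidences lifts to the
  universal cover \<open>\<real>\<^sup>3\<close> as a nowhere vanishing map \<open>D = f - f \<circ> t\<^sub>\<phi>\<close> to \<open>\<complex>\<close> which is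
  invariant under \<open>ker \<phi>\<close> and changes sign under the other deck transformations. A continuous
  logarithm of \<open>D\<close> then changes by a constant \<open>N\<^sub>g \<in> \<i>\<pi>\<int>\<close> under each deck transformation \<open>g\<close>,
  and the relations \<open>t x t\<^sup>-\<^sup>1 = x\<^sup>a y\<^sup>b\<close>, \<open>t y t\<^sup>-\<^sup>1 = x\<^sup>c y\<^sup>d\<close> make \<open>(N\<^sub>x, N\<^sub>y)\<close> a fixed vector of
  \<open>\<Theta>\<close>, hence zero because \<open>det (\<Theta> - I) \<noteq> 0\<close>. So \<open>D\<close> is invariant under \<open>x\<close> and \<open>y\<close>, i.e.
  \<open>\<phi>(x) = \<phi>(y) = 0\<close>, which forces \<open>\<phi> = \<rho>\<close>.

  It suffices to find a nowhere vanishing map \<open>F : \<real>\<^sup>3 \<rightarrow> \<real>\<^sup>3\<close> with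
  \<open>F (g p) = (-1)\<^bsup>\<phi> g\<^esup> F p\<close>. Over the torus fibre \<open>F\<close> is the point of the equator of \<open>S\<^sup>2\<close> at angle
  \<open>\<pi>(\<phi>(x) u + \<phi>(y) v)\<close>; along one turn of the base circle it is rotated by \<open>\<pi>\<close> about a horizontal
  axis, ending at the mirror image, which matches the monodromy because \<open>\<Theta> \<equiv> -I (mod 4)\<close>.
\<close>

section \<open>Powers of the monodromy\<close>

lemma thmap_thinv:
  assumes "a * d - b * c = 1"
  shows "thmap a b c d (thinv a b c d p) = (p :: 'r::comm_ring_1 \<times> 'r)"
proof -
  obtain x y where p: "p = (x, y)" by (cases p)
  have D: "(of_int a * of_int d - of_int b * of_int c :: 'r) = 1"
    using assms by (metis of_int_1 of_int_diff of_int_mult)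
  have "of_int a * (of_int d * x - of_int c * y) + of_int c * (- (of_int b * x) + of_int a * y)
      = (of_int a * of_int d - of_int b * of_int c) * x"
    "of_int b * (of_int d * x - of_int c * y) + of_int d * (- (of_int b * x) + of_int a * y)
      = (of_int a * of_int d - of_int b * of_int c) * y"
    by (simp_all add: algebra_simps)
  then show ?thesis unfolding p thmap_def thinv_def using D by simp
qed

lemma thinv_thmap:
  assumes "a * d - b * c = 1"
  shows "thinv a b c d (thmap a b c d p) = (p :: 'r::comm_ring_1 \<times> 'r)"
proof -
  obtain x y where p: "p = (x, y)" by (cases p)
  have D: "(of_int a * of_int d - of_int b * of_int c :: 'r) = 1"
    using assms by (metis of_int_1 of_int_diff of_int_mult)
  have "of_int d * (of_int a * x + of_int c * y) - of_int c * (of_int b * x + of_int d * y)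
      = (of_int a * of_int d - of_int b * of_int c) * x"
    "- (of_int b * (of_int a * x + of_int c * y)) + of_int a * (of_int b * x + of_int d * y)
      = (of_int a * of_int d - of_int b * of_int c) * y"
    by (simp_all add: algebra_simps)
  then show ?thesis unfolding p thmap_def thinv_def using D by simp
qed

lemma thpow_0 [simp]: "thpow a b c d 0 = id"
  by (simp add: thpow_def fun_eq_iff)

lemma thpow_1: "thpow a b c d 1 = thmap a b c d"
  by (simp add: thpow_def)

lemma thpow_succ:
  assumes "a * d - b * c = 1"
  shows "thpow a b c d (n + 1) p = thmap a b c d (thpow a b c d n (p :: 'r::comm_ring_1 \<times> 'r))"
proof (cases "0 \<le> n")
  case True
  then have "nat (n + 1) = Suc (nat n)" by simp
  with True show ?thesis by (simp add: thpow_def)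
next
  case False
  then have "nat (- n) = Suc (nat (- (n + 1)))" by simp
  moreover have "thmap a b c d (thinv a b c d q) = q" for q :: "'r \<times> 'r"
    by (rule thmap_thinv[OF assms])
  ultimately show ?thesis using False by (simp add: thpow_def)
qed

lemma thpow_pred:
  assumes "a * d - b * c = 1"
  shows "thpow a b c d (n - 1) p = thinv a b c d (thpow a b c d n (p :: 'r::comm_ring_1 \<times> 'r))"
  using thpow_succ[OF assms, of "n - 1" p] thinv_thmap[OF assms, of "thpow a b c d (n - 1) p"] by simp

lemma thpow_add:
  assumes "a * d - b * c = 1"
  shows "thpow a b c d (n + m) p = thpow a b c d n (thpow a b c d m (p :: 'r::comm_ring_1 \<times> 'r))"
proof (induction n rule: int_induct[where k = 0])
  case (step1 i)
  have "thpow a b c d (i + 1 + m) p = thpow a b c d ((i + m) + 1) p" by (simp add: algebra_simps)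
  with step1 show ?case by (simp add: thpow_succ[OF assms])
next
  case (step2 i)
  have "thpow a b c d (i - 1 + m) p = thpow a b c d ((i + m) - 1) p" by (simp add: algebra_simps)
  with step2 show ?case by (simp add: thpow_pred[OF assms])
qed simp

lemma thpow_vec_add:
  assumes "a * d - b * c = 1"
  shows "thpow a b c d n (p + q) = thpow a b c d n p + thpow a b c d n (q :: 'r::comm_ring_1 \<times> 'r)"
proof (induction n rule: int_induct[where k = 0])
  case (step1 i)
  then show ?case unfolding thpow_succ[OF assms] by (simp add: thmap_def algebra_simps)
next
  case (step2 i)
  then show ?case unfolding thpow_pred[OF assms] by (simp add: thinv_def algebra_simps)
qed simp

lemma thpow_vec_zero:
  assumes "a * d - b * c = 1"
  shows "thpow a b c d n 0 = (0 :: 'r::comm_ring_1 \<times> 'r)"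
  using thpow_vec_add[OF assms, of n "0 :: 'r \<times> 'r" 0] by simp

lemma thpow_vec_minus:
  assumes "a * d - b * c = 1"
  shows "thpow a b c d n (- p) = - thpow a b c d n (p :: 'r::comm_ring_1 \<times> 'r)"
proof -
  have "thpow a b c d n (- p) + thpow a b c d n p = 0"
    using thpow_vec_add[OF assms, of n "- p" p] by (simp add: thpow_vec_zero[OF assms])
  then show ?thesis by (simp add: eq_neg_iff_add_eq_0)
qed

lemma thpow_of_int:
  assumes "a * d - b * c = 1"
  shows "thpow a b c d n (of_int (fst m), of_int (snd m)) =
     ((of_int (fst (thpow a b c d n m)), of_int (snd (thpow a b c d n m))) :: 'r::comm_ring_1 \<times> 'r)"
proof (induction n rule: int_induct[where k = 0])
  case (step1 i)
  then show ?case unfolding thpow_succ[OF assms] by (simp add: thmap_def)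
next
  case (step2 i)
  then show ?case unfolding thpow_pred[OF assms] by (simp add: thinv_def)
qed simp

lemma thpow_cong_mod2:
  fixes m :: "int \<times> int"
  assumes "a * d - b * c = 1" "odd a" "even b" "even c" "odd d"
  shows "even (fst (thpow a b c d n m) - fst m) \<and> even (snd (thpow a b c d n m) - snd m)"
proof (induction n rule: int_induct[where k = 0])
  case (step1 i)
  obtain x y where xy: "thpow a b c d i m = (x, y)" by (cases "thpow a b c d i m")
  have "a * x + c * y - fst m = (a - 1) * x + c * y + (x - fst m)"
    "b * x + d * y - snd m = b * x + (d - 1) * y + (y - snd m)" by (simp_all add: algebra_simps)
  with step1 assms xy show ?case unfolding thpow_succ[OF assms(1)] thmap_def by simp
next
  case (step2 i)
  obtain x y where xy: "thpow a b c d i m = (x, y)" by (cases "thpow a b c d i m")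
  have "d * x - c * y - fst m = (d - 1) * x - c * y + (x - fst m)"
    "- (b * x) + a * y - snd m = - (b * x) + (a - 1) * y + (y - snd m)" by (simp_all add: algebra_simps)
  with step2 assms xy show ?case unfolding thpow_pred[OF assms(1)] thinv_def by simp
qed simp

lemma continuous_on_funpow:
  "continuous_on UNIV f \<Longrightarrow> continuous_on UNIV (f ^^ k :: 'a::topological_space \<Rightarrow> 'a)"
  by (induction k) (auto simp: id_def intro: continuous_on_compose2[of UNIV f UNIV])

lemma continuous_on_thpow: "continuous_on UNIV (thpow a b c d n :: real \<times> real \<Rightarrow> real \<times> real)"
proof -
  have "continuous_on UNIV (thmap a b c d :: real \<times> real \<Rightarrow> _)"
    "continuous_on UNIV (thinv a b c d :: real \<times> real \<Rightarrow> _)"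
    unfolding thmap_def thinv_def by (intro continuous_intros)+
  then show ?thesis unfolding thpow_def by (simp add: continuous_on_funpow)
qed

section \<open>The group and its deck action\<close>

lemma pi_grp_mult: "mult (pi_grp a b c d) g h = (fst g + thpow a b c d (snd g) (fst h), snd g + snd h)"
  by (simp add: pi_grp_def)

definition pi_inv :: "int \<Rightarrow> int \<Rightarrow> int \<Rightarrow> int \<Rightarrow> (int \<times> int) \<times> int \<Rightarrow> (int \<times> int) \<times> int" where
  "pi_inv a b c d g = (- thpow a b c d (- snd g) (fst g), - snd g)"

lemma pi_grp_mult_inv:
  assumes "a * d - b * c = 1"
  shows "mult (pi_grp a b c d) g (pi_inv a b c d g) = ((0, 0), 0)"
proof -
  have "thpow a b c d (snd g) (- thpow a b c d (- snd g) (fst g)) = - fst g"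
    using thpow_add[OF assms, of "snd g" "- snd g" "fst g"] by (simp add: thpow_vec_minus[OF assms])
  then show ?thesis by (simp add: pi_grp_mult pi_inv_def zero_prod_def)
qed

lemma pi_grp_inv_mult: "mult (pi_grp a b c d) (pi_inv a b c d g) g = ((0, 0), 0)"
  by (simp add: pi_grp_mult pi_inv_def zero_prod_def)

lemma deck_act_one: "deck_act a b c d ((0, 0), 0) p = p"
  by (simp add: deck_act_def zero_prod_def[symmetric])

lemma deck_act_mult:
  assumes "a * d - b * c = 1"
  shows "deck_act a b c d g (deck_act a b c d h p) = deck_act a b c d (mult (pi_grp a b c d) g h) p"
proof -
  have "thpow a b c d (snd g) (thpow a b c d (snd h) (fst p) + (of_int (fst (fst h)), of_int (snd (fst h))))
     = thpow a b c d (snd g + snd h) (fst p)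
       + ((of_int (fst (thpow a b c d (snd g) (fst h))), of_int (snd (thpow a b c d (snd g) (fst h)))) :: real \<times> real)"
    by (simp add: thpow_vec_add[OF assms] thpow_add[OF assms] thpow_of_int[OF assms])
  then show ?thesis by (simp add: deck_act_def pi_grp_mult algebra_simps)
qed

lemma deck_act_inv:
  assumes "a * d - b * c = 1"
  shows "deck_act a b c d g (deck_act a b c d (pi_inv a b c d g) p) = p"
    "deck_act a b c d (pi_inv a b c d g) (deck_act a b c d g p) = p"
  by (simp_all add: deck_act_mult[OF assms] pi_grp_mult_inv[OF assms] pi_grp_inv_mult deck_act_one)

lemma deck_act_translate: "deck_act a b c d ((m1, m2), 0) p = p + ((of_int m1, of_int m2), 0)"
  by (cases p) (simp add: deck_act_def)

lemma deck_act_conj: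
  assumes "a * d - b * c = 1"
  shows "deck_act a b c d ((0, 0), 1) (deck_act a b c d ((m1, m2), 0) p)
       = deck_act a b c d (thmap a b c d (m1, m2), 0) (deck_act a b c d ((0, 0), 1) p)"
  by (simp add: deck_act_mult[OF assms] pi_grp_mult thpow_1 zero_prod_def[symmetric])

lemma continuous_on_deck_act: "continuous_on UNIV (deck_act a b c d g)"
proof -
  have "continuous_on UNIV (\<lambda>p::(real \<times> real) \<times> real. thpow a b c d (snd g) (fst p))"
    by (rule continuous_on_compose2[OF continuous_on_thpow]) (auto intro: continuous_intros)
  then show ?thesis unfolding deck_act_def by (intro continuous_intros)
qed

section \<open>Homomorphisms onto \<open>\<int>/2\<close>\<close>

lemma mod2_additive_eq:
  fixes \<psi> :: "int \<Rightarrow> int"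
  assumes add: "\<And>i j. \<psi> (i + j) = (\<psi> i + \<psi> j) mod 2" and range: "\<And>i. \<psi> i = 0 \<or> \<psi> i = 1"
  shows "\<psi> m = (m * \<psi> 1) mod 2"
proof (induction m rule: int_induct[where k = 0])
  case base
  show ?case using add[of 0 0] range[of 0] by auto
next
  case (step1 i)
  then show ?case using add[of i 1] range[of 1] by (auto simp: algebra_simps) presburger+
next
  case (step2 i)
  then show ?case using add[of "i - 1" 1] range[of 1] range[of "i - 1"]
    by (auto simp: algebra_simps) presburger+
qed

lemma hom_Z2_mult:
  assumes "\<phi> \<in> hom (pi_grp a b c d) Z2"
  shows "\<phi> (mult (pi_grp a b c d) g h) = (\<phi> g + \<phi> h) mod 2"
  using hom_mult[OF assms, of g h] by (simp add: pi_grp_def)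

lemma hom_Z2_cases:
  assumes "\<phi> \<in> hom (pi_grp a b c d) Z2"
  shows "\<phi> g = 0 \<or> \<phi> g = 1"
proof -
  have "\<phi> g \<in> carrier Z2" using hom_in_carrier[OF assms, of g] by (simp add: pi_grp_def)
  then show ?thesis by (auto simp: carrier_integer_mod_group)
qed

lemma hom_Z2_eq:
  assumes hom: "\<phi> \<in> hom (pi_grp a b c d) Z2" and det: "a * d - b * c = 1"
  shows "\<phi> g = (fst (fst g) * \<phi> ((1, 0), 0) + snd (fst g) * \<phi> ((0, 1), 0) + snd g * \<phi> ((0, 0), 1)) mod 2"
proof -
  note mult = hom_Z2_mult[OF hom] and cases = hom_Z2_cases[OF hom]
  have x: "\<phi> ((m, 0), 0) = (m * \<phi> ((1, 0), 0)) mod 2" for m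
    by (rule mod2_additive_eq[of "\<lambda>m. \<phi> ((m, 0), 0)"])
       (use mult[of "((_, 0), 0)" "((_, 0), 0)"] cases in \<open>auto simp: pi_grp_mult\<close>)
  have y: "\<phi> ((0, m), 0) = (m * \<phi> ((0, 1), 0)) mod 2" for m
    by (rule mod2_additive_eq[of "\<lambda>m. \<phi> ((0, m), 0)"])
       (use mult[of "((0, _), 0)" "((0, _), 0)"] cases in \<open>auto simp: pi_grp_mult\<close>)
  have zero: "thpow a b c d n (0::int, 0::int) = (0, 0)" for n
    using thpow_vec_zero[OF det, of n] by (simp add: zero_prod_def)
  have t: "\<phi> ((0, 0), m) = (m * \<phi> ((0, 0), 1)) mod 2" for m
    by (rule mod2_additive_eq[of "\<lambda>m. \<phi> ((0, 0), m)"])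
       (use mult[of "((0, 0), _)" "((0, 0), _)"] cases in \<open>auto simp: pi_grp_mult zero\<close>)
  obtain m1 m2 n where g: "g = ((m1, m2), n)" by (metis prod.collapse)
  have "g = mult (pi_grp a b c d) (mult (pi_grp a b c d) ((m1, 0), 0) ((0, m2), 0)) ((0, 0), n)"
    by (simp add: g pi_grp_mult zero)
  then have "\<phi> g = ((\<phi> ((m1, 0), 0) + \<phi> ((0, m2), 0)) mod 2 + \<phi> ((0, 0), n)) mod 2"
    using mult by metis
  then show ?thesis unfolding x[of m1] y[of m2] t[of n] g by (simp add: mod_add_eq)
qed

section \<open>Quotient topologies\<close>

lemma istopology_quotient:
  "istopology (\<lambda>U. U \<subseteq> q ` topspace X \<and> openin X {x \<in> topspace X. q x \<in> U})"
proof -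
  have int: "{x \<in> topspace X. q x \<in> S \<inter> T} = {x \<in> topspace X. q x \<in> S} \<inter> {x \<in> topspace X. q x \<in> T}"
    for S T by auto
  have union: "{x \<in> topspace X. q x \<in> \<Union>K} = \<Union>((\<lambda>S. {x \<in> topspace X. q x \<in> S}) ` K)" for K
    by auto
  show ?thesis unfolding istopology_def int union by (auto intro: openin_Int intro!: openin_Union)
qed

lemma openin_quotient_top:
  "openin (quotient_top X q) U \<longleftrightarrow> U \<subseteq> q ` topspace X \<and> openin X {x \<in> topspace X. q x \<in> U}"
  unfolding quotient_top_def by (simp add: topology_inverse'[OF istopology_quotient])

lemma topspace_quotient_top: "topspace (quotient_top X q) = q ` topspace X"
proof -
  have "openin (quotient_top X q) (q ` topspace X)"
    unfolding openin_quotient_top by (simp add: Collect_conj_eq Int_absorb2 subset_iff)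
  then have "q ` topspace X \<subseteq> topspace (quotient_top X q)" by (rule openin_subset)
  moreover have "topspace (quotient_top X q) \<subseteq> q ` topspace X"
    unfolding topspace_def openin_quotient_top by auto
  ultimately show ?thesis by blast
qed

lemma quotient_map_quotient_top: "quotient_map X (quotient_top X q) q"
  unfolding quotient_map_def topspace_quotient_top openin_quotient_top by auto

section \<open>The double cover and its involution\<close>

locale torus_double_cover =
  fixes a b c d :: int and \<phi> :: "(int \<times> int) \<times> int \<Rightarrow> int"
  assumes det: "a * d - b * c = 1"
    and hom: "\<phi> \<in> hom (pi_grp a b c d) Z2"
begin

abbreviation "q \<equiv> cover_proj a b c d \<phi>"
abbreviation "\<tau> \<equiv> cover_invol a b c d \<phi>"
abbreviation "act \<equiv> deck_act a b c d"
abbreviation "gmult \<equiv> mult (pi_grp a b c d)"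
abbreviation "ginv \<equiv> pi_inv a b c d"

lemmas phi_mult = hom_Z2_mult[OF hom] and phi_cases = hom_Z2_cases[OF hom]

lemma phi_one: "\<phi> ((0, 0), 0) = 0"
proof -
  have "gmult ((0, 0), 0) ((0, 0), 0) = ((0, 0), 0)"
    by (simp add: pi_grp_mult zero_prod_def[symmetric] thpow_vec_zero[OF det])
  then show ?thesis using phi_mult[of "((0, 0), 0)" "((0, 0), 0)"] phi_cases[of "((0, 0), 0)"] by auto
qed

lemma phi_inv: "\<phi> (ginv g) = \<phi> g"
  using phi_mult[of g "ginv g"] pi_grp_mult_inv[OF det, of g] phi_one phi_cases[of g] phi_cases[of "ginv g"]
  by auto

lemma deck_act_eq_if_phi_eq:
  assumes inv: "\<And>g p. \<phi> g = 0 \<Longrightarrow> F (act g p) = F p" and eq: "\<phi> g = \<phi> h"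
  shows "F (act g p) = F (act h p)"
proof -
  have "act g p = act (gmult g (ginv h)) (act h p)"
    by (simp flip: deck_act_mult[OF det] add: deck_act_inv[OF det])
  moreover have "\<phi> (gmult g (ginv h)) = 0"
    using phi_mult phi_inv eq phi_cases[of h] by auto
  ultimately show ?thesis using inv[of "gmult g (ginv h)" "act h p"] by simp
qed

lemma mem_cover_proj_self: "p \<in> q p"
  unfolding cover_proj_def using phi_one deck_act_one[of a b c d p] by force

lemma cover_proj_deck_act:
  assumes g: "\<phi> g = 0"
  shows "q (act g p) = q p"
proof
  show "q (act g p) \<subseteq> q p"
  proof
    fix x assume "x \<in> q (act g p)"
    then obtain k where "\<phi> k = 0" "x = act k (act g p)" unfolding cover_proj_def by auto
    then have "x = act (gmult k g) p" "\<phi> (gmult k g) = 0" using deck_act_mult[OF det] phi_mult g by auto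
    then show "x \<in> q p" unfolding cover_proj_def by blast
  qed
next
  show "q p \<subseteq> q (act g p)"
  proof
    fix x assume "x \<in> q p"
    then obtain k where k: "\<phi> k = 0" "x = act k p" unfolding cover_proj_def by auto
    then have "x = act (gmult k (ginv g)) (act g p)"
      by (simp flip: deck_act_mult[OF det] add: deck_act_inv[OF det])
    moreover have "\<phi> (gmult k (ginv g)) = 0" using phi_mult phi_inv k g by simp
    ultimately show "x \<in> q (act g p)" unfolding cover_proj_def by blast
  qed
qed

lemma cover_invol_cover_proj:
  assumes g: "\<phi> g = 1"
  shows "\<tau> (q p) = q (act g p)"
proof
  show "\<tau> (q p) \<subseteq> q (act g p)"
  proof
    fix x assume "x \<in> \<tau> (q p)"
    then obtain h k where hk: "\<phi> h = 1" "\<phi> k = 0" "x = act h (act k p)"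
      unfolding cover_invol_def cover_proj_def by auto
    then have "x = act (gmult (gmult h k) (ginv g)) (act g p)"
      by (simp flip: deck_act_mult[OF det] add: deck_act_inv[OF det])
    moreover have "\<phi> (gmult (gmult h k) (ginv g)) = 0" using phi_mult phi_inv hk g by simp
    ultimately show "x \<in> q (act g p)" unfolding cover_proj_def by blast
  qed
next
  show "q (act g p) \<subseteq> \<tau> (q p)"
  proof
    fix x assume "x \<in> q (act g p)"
    then obtain k where "\<phi> k = 0" "x = act k (act g p)" unfolding cover_proj_def by auto
    then have "x = act (gmult k g) p" "\<phi> (gmult k g) = 1" using deck_act_mult[OF det] phi_mult g by auto
    then show "x \<in> \<tau> (q p)" unfolding cover_invol_def using mem_cover_proj_self by blast
  qed
qed

lemma cover_proj_eqE:
  assumes "q p = q p'"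
  obtains k where "\<phi> k = 0" "p' = act k p"
proof -
  have "p' \<in> q p" using mem_cover_proj_self[of p'] assms by simp
  then show thesis using that unfolding cover_proj_def by blast
qed

lemma topspace_double_cover: "topspace (double_cover a b c d \<phi>) = range q"
  unfolding double_cover_def topspace_quotient_top by simp

lemma quotient_map_cover_proj: "quotient_map euclidean (double_cover a b c d \<phi>) q"
  unfolding double_cover_def by (rule quotient_map_quotient_top)

text \<open>Maps on the double cover are the maps on the universal cover \<open>\<real>\<^sup>3\<close> invariant
  under \<open>ker \<phi>\<close>, and the involution lifts to any deck transformation outside \<open>ker \<phi>\<close>.\<close>

lemma BU_prop_iff_lifted:
  assumes g0: "\<phi> g0 = 1"
  shows "BU_prop (double_cover a b c d \<phi>) \<tau> k \<longleftrightarrow>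
    (\<forall>F. continuous_map euclidean (Euclidean_space k) F \<and> (\<forall>g p. \<phi> g = 0 \<longrightarrow> F (act g p) = F p)
      \<longrightarrow> (\<exists>p. F p = F (act g0 p)))"
proof
  assume BU: "BU_prop (double_cover a b c d \<phi>) \<tau> k"
  show "\<forall>F. continuous_map euclidean (Euclidean_space k) F \<and> (\<forall>g p. \<phi> g = 0 \<longrightarrow> F (act g p) = F p)
      \<longrightarrow> (\<exists>p. F p = F (act g0 p))"
  proof (intro allI impI, elim conjE)
    fix F assume cF: "continuous_map euclidean (Euclidean_space k) F"
      and inv: "\<forall>g p. \<phi> g = 0 \<longrightarrow> F (act g p) = F p"
    define f where "f x = F (SOME p. q p = x)" for x
    have fq: "f (q p) = F p" for p
    proof -
      have "q (SOME p'. q p' = q p) = q p" by (rule someI) simp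
      then obtain k where "\<phi> k = 0" "p = act k (SOME p'. q p' = q p)" by (rule cover_proj_eqE)
      then show ?thesis unfolding f_def using inv by (metis (no_types))
    qed
    then have "f \<circ> q = F" by auto
    then have "continuous_map (double_cover a b c d \<phi>) (Euclidean_space k) f"
      using continuous_compose_quotient_map_eq[OF quotient_map_cover_proj] cF by metis
    then obtain x where "x \<in> topspace (double_cover a b c d \<phi>)" "f x = f (\<tau> x)"
      using BU unfolding BU_prop_def by blast
    then show "\<exists>p. F p = F (act g0 p)"
      unfolding topspace_double_cover by (auto simp: cover_invol_cover_proj[OF g0] fq simp del: split_paired_Ex)
  qed
next
  assume lifted: "\<forall>F. continuous_map euclidean (Euclidean_space k) F \<and> (\<forall>g p. \<phi> g = 0 \<longrightarrow> F (act g p) = F p)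
      \<longrightarrow> (\<exists>p. F p = F (act g0 p))"
  show "BU_prop (double_cover a b c d \<phi>) \<tau> k"
    unfolding BU_prop_def
  proof (intro allI impI)
    fix f assume "continuous_map (double_cover a b c d \<phi>) (Euclidean_space k) f"
    then have "continuous_map euclidean (Euclidean_space k) (f \<circ> q)"
      by (rule continuous_map_compose[OF quotient_imp_continuous_map[OF quotient_map_cover_proj]])
    moreover have "\<forall>g p. \<phi> g = 0 \<longrightarrow> (f \<circ> q) (act g p) = (f \<circ> q) p"
      by (simp add: cover_proj_deck_act)
    ultimately obtain p where "f (q p) = f (q (act g0 p))" using lifted by auto
    then show "\<exists>x\<in>topspace (double_cover a b c d \<phi>). f x = f (\<tau> x)"
      using cover_invol_cover_proj[OF g0, of p] unfolding topspace_double_cover by (metis rangeI)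
  qed
qed

end

section \<open>Lower bound\<close>

lemma continuous_exp_double_eq_1_imp_constant:
  fixes \<delta> :: "'a::real_normed_vector \<Rightarrow> complex"
  assumes cont: "continuous_on UNIV \<delta>" and exp: "\<And>p. exp (2 * \<delta> p) = 1"
  shows "\<delta> constant_on UNIV"
proof (rule continuous_discrete_range_constant)
  show "connected (UNIV :: 'a set)" by (simp add: convex_connected)
  show "continuous_on UNIV \<delta>" by (rule cont)
  have "\<exists>n::int. \<delta> p = \<i> * of_real pi * of_int n" for p
  proof -
    from exp[of p] obtain n :: int where "Re (2 * \<delta> p) = 0" "Im (2 * \<delta> p) = of_int (2 * n) * pi"
      unfolding exp_eq_1 by blast
    then have "\<delta> p = \<i> * of_real pi * of_int n" by (intro complex_eqI) auto
    then show ?thesis by blast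
  qed
  then obtain n where n: "\<And>p. \<delta> p = \<i> * of_real pi * of_int (n p)" by metis
  fix x :: 'a
  show "\<exists>e>0. \<forall>y. y \<in> UNIV \<and> \<delta> y \<noteq> \<delta> x \<longrightarrow> e \<le> norm (\<delta> y - \<delta> x)"
  proof (intro exI[of _ pi] conjI allI impI)
    fix y assume "y \<in> UNIV \<and> \<delta> y \<noteq> \<delta> x"
    then have "n y \<noteq> n x" using n by metis
    then have "1 \<le> \<bar>real_of_int (n y - n x)\<bar>" by linarith
    moreover have "\<delta> y - \<delta> x = \<i> * of_real pi * of_int (n y - n x)"
      using n[of x] n[of y] by (simp add: algebra_simps)
    then have "norm (\<delta> y - \<delta> x) = pi * \<bar>real_of_int (n y - n x)\<bar>"
      by (simp only: norm_mult norm_of_int) simp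
    ultimately show "pi \<le> norm (\<delta> y - \<delta> x)" by (simp add: mult_le_cancel_left1)
  qed simp
qed

text \<open>The change lies in the discrete set \<open>\<i>\<pi>\<int>\<close> and depends continuously on the point.\<close>

lemma continuous_log_shift_constant:
  fixes h :: "'a::real_normed_vector \<Rightarrow> complex" and \<sigma> :: "'a \<Rightarrow> 'a"
  assumes ch: "continuous_on UNIV h" and c\<sigma>: "continuous_on UNIV \<sigma>"
    and sign: "\<And>p. exp (h (\<sigma> p)) = exp (h p) \<or> exp (h (\<sigma> p)) = - exp (h p)"
  shows "\<exists>N. \<forall>p. h (\<sigma> p) = h p + N"
proof -
  define \<delta> where "\<delta> p = h (\<sigma> p) - h p" for p
  have "continuous_on UNIV \<delta>"
    unfolding \<delta>_def by (intro continuous_on_diff continuous_on_compose2[OF ch c\<sigma>] ch) auto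
  moreover have "exp (2 * \<delta> p) = 1" for p
    using sign[of p] by (auto simp: \<delta>_def exp_double exp_diff power_divide)
  ultimately have "\<delta> constant_on UNIV" by (rule continuous_exp_double_eq_1_imp_constant)
  then obtain N where "\<And>p. \<delta> p = N" unfolding constant_on_def by blast
  then have "h (\<sigma> p) = h p + N" for p unfolding \<delta>_def by (simp add: diff_eq_eq add.commute)
  then show ?thesis by blast
qed

lemma fixed_vector_eq_0:
  fixes x y :: "'a::{idom, ring_char_0}"
  assumes Delta: "(a - 1) * (d - 1) - b * c \<noteq> 0"
    and fix1: "x = of_int a * x + of_int b * y" and fix2: "y = of_int c * x + of_int d * y"
  shows "x = 0 \<and> y = 0"
proof -
  let ?\<Delta> = "(of_int a - 1) * (of_int d - 1) - of_int b * of_int c :: 'a"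
  have "(of_int a - 1) * x + of_int b * y = (of_int a * x + of_int b * y) - x"
    "of_int c * x + (of_int d - 1) * y = (of_int c * x + of_int d * y) - y"
    by (simp_all add: algebra_simps)
  then have e1: "(of_int a - 1) * x + of_int b * y = 0" and e2: "of_int c * x + (of_int d - 1) * y = 0"
    unfolding fix1[symmetric] fix2[symmetric] by simp_all
  have "?\<Delta> * x = (of_int d - 1) * ((of_int a - 1) * x + of_int b * y) - of_int b * (of_int c * x + (of_int d - 1) * y)"
    "?\<Delta> * y = (of_int a - 1) * (of_int c * x + (of_int d - 1) * y) - of_int c * ((of_int a - 1) * x + of_int b * y)"
    by (simp_all add: algebra_simps)
  then have "?\<Delta> * x = 0" "?\<Delta> * y = 0" unfolding e1 e2 by simp_all
  moreover have "?\<Delta> = of_int ((a - 1) * (d - 1) - b * c)" by simp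
  then have "?\<Delta> \<noteq> 0" using Delta by (simp only: of_int_eq_0_iff not_False_eq_True)
  ultimately show ?thesis by simp
qed

lemma shift_by_int_multiple:
  fixes h :: "'a::real_vector \<Rightarrow> 'b::ring_1"
  assumes shift: "\<And>p. h (p + v) = h p + N"
  shows "h (p + of_int m *\<^sub>R v) = h p + of_int m * N"
proof (induction m arbitrary: p rule: int_induct[where k = 0])
  case (step1 i)
  then show ?case using shift[of "p + of_int i *\<^sub>R v"] by (simp add: algebra_simps)
next
  case (step2 i)
  then show ?case using shift[of "p + of_int (i - 1) *\<^sub>R v"] by (simp add: algebra_simps)
qed simp

text \<open>Compute the change along \<open>t x = x\<^sup>a y\<^sup>b t\<close> and \<open>t y = x\<^sup>c y\<^sup>d t\<close> in two ways.\<close>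

lemma deck_shift_fixed_by_monodromy:
  fixes h :: "(real \<times> real) \<times> real \<Rightarrow> 'b::ring_1"
  assumes det: "a * d - b * c = 1"
    and x: "\<And>p. h (deck_act a b c d ((1, 0), 0) p) = h p + NX"
    and y: "\<And>p. h (deck_act a b c d ((0, 1), 0) p) = h p + NY"
    and t: "\<And>p. h (deck_act a b c d ((0, 0), 1) p) = h p + NT"
  shows "NX = of_int a * NX + of_int b * NY \<and> NY = of_int c * NX + of_int d * NY"
proof -
  have translate: "h (deck_act a b c d ((m1, m2), 0) p) = h p + of_int m1 * NX + of_int m2 * NY"
    for m1 m2 p
  proof -
    have split: "deck_act a b c d ((m1, m2), 0) p = (p + ((of_int m1, 0), 0)) + ((0, of_int m2), 0)"
      by (simp add: deck_act_translate)
    have "h (q + ((of_int m, 0), 0)) = h q + of_int m * NX" for q m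
      using shift_by_int_multiple[of h "((1, 0), 0)" NX q m] x by (simp add: deck_act_translate)
    moreover have "h (q + ((0, of_int m), 0)) = h q + of_int m * NY" for q m
      using shift_by_int_multiple[of h "((0, 1), 0)" NY q m] y by (simp add: deck_act_translate)
    ultimately show ?thesis unfolding split by (simp only:)
  qed
  have "of_int m1 * NX + of_int m2 * NY = of_int (a * m1 + c * m2) * NX + of_int (b * m1 + d * m2) * NY"
    for m1 m2
  proof -
    let ?p = "deck_act a b c d ((0, 0), 1) (deck_act a b c d ((m1, m2), 0) 0)"
    have "h ?p = h 0 + of_int m1 * NX + of_int m2 * NY + NT" by (simp add: t translate)
    moreover have "h ?p = h 0 + NT + of_int (a * m1 + c * m2) * NX + of_int (b * m1 + d * m2) * NY"
      by (simp add: deck_act_conj[OF det] thmap_def t translate)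
    ultimately show ?thesis by (simp add: algebra_simps)
  qed
  from this[of 1 0] this[of 0 1] show ?thesis by simp
qed

context torus_double_cover
begin

lemma sign_changing_map_trivial_on_fibre:
  fixes D :: "(real \<times> real) \<times> real \<Rightarrow> complex"
  assumes Delta: "(a - 1) * (d - 1) - b * c \<noteq> 0"
    and cont: "continuous_on UNIV D" and nz: "\<And>p. D p \<noteq> 0"
    and sign: "\<And>g p. D (act g p) = (if \<phi> g = 0 then D p else - D p)"
  shows "\<phi> ((1, 0), 0) = 0 \<and> \<phi> ((0, 1), 0) = 0"
proof -
  obtain h where ch: "continuous_on UNIV h" and eh: "\<And>p. D p = exp (h p)"
    by (rule continuous_logarithm_on_contractible[OF cont contractible_UNIV]) (use nz in auto)
  have "\<exists>N. \<forall>p. h (act g p) = h p + N" for g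
    by (rule continuous_log_shift_constant[OF ch continuous_on_deck_act]) (simp add: eh[symmetric] sign)
  then obtain N where N: "\<And>g p. h (act g p) = h p + N g" by metis
  have "N ((1, 0), 0) = 0 \<and> N ((0, 1), 0) = 0"
    using fixed_vector_eq_0[OF Delta] deck_shift_fixed_by_monodromy[OF det N N N] by blast
  then have "D (act ((1, 0), 0) p) = D p" "D (act ((0, 1), 0) p) = D p" for p
    by (simp_all add: eh N)
  moreover have "\<phi> g = 0" if "D (act g p) = D p" for g p
  proof (rule ccontr)
    assume "\<phi> g \<noteq> 0"
    then have "D p + D p = 0" using that sign[of g p] by simp
    then show False using nz[of p] by (simp flip: mult_2)
  qed
  ultimately show ?thesis by blast
qed

lemma deck_act_lifted_sign:
  assumes inv: "\<And>g p. \<phi> g = 0 \<Longrightarrow> F (act g p) = F p" and g0: "\<phi> g0 = 1"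
  shows "F (act g p) = (if \<phi> g = 0 then F p else F (act g0 p))"
    and "F (act g0 (act g p)) = (if \<phi> g = 0 then F (act g0 p) else F p)"
proof -
  have prod: "\<phi> (gmult g0 g) = (if \<phi> g = 0 then 1 else 0)"
    using phi_mult g0 phi_cases[of g] by auto
  show "F (act g p) = (if \<phi> g = 0 then F p else F (act g0 p))"
  proof (cases "\<phi> g = 0")
    case False
    then show ?thesis using deck_act_eq_if_phi_eq[OF inv, of g g0 p] g0 phi_cases[of g] by simp
  qed (simp add: inv)
  show "F (act g0 (act g p)) = (if \<phi> g = 0 then F (act g0 p) else F p)"
    using deck_act_eq_if_phi_eq[OF inv, of "gmult g0 g" g0] deck_act_eq_if_phi_eq[OF inv, of "gmult g0 g" "((0, 0), 0)"]
      prod g0 phi_one by (simp add: deck_act_mult[OF det] deck_act_one)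
qed

lemma BU_prop_2:
  assumes g0: "\<phi> g0 = 1" and Delta: "(a - 1) * (d - 1) - b * c \<noteq> 0"
    and not_rho: "\<phi> ((1, 0), 0) \<noteq> 0 \<or> \<phi> ((0, 1), 0) \<noteq> 0"
  shows "BU_prop (double_cover a b c d \<phi>) \<tau> 2"
  unfolding BU_prop_iff_lifted[OF g0]
proof (intro allI impI, elim conjE, rule ccontr)
  fix F :: "(real \<times> real) \<times> real \<Rightarrow> nat \<Rightarrow> real"
  assume cF: "continuous_map euclidean (Euclidean_space 2) F"
    and inv: "\<forall>g p. \<phi> g = 0 \<longrightarrow> F (act g p) = F p" and "\<nexists>p. F p = F (act g0 p)"
  then have ne: "F p \<noteq> F (act g0 p)" for p by blast
  have comp: "continuous_on UNIV (\<lambda>p. F p i)" for i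
    using cF unfolding Euclidean_space_def continuous_map_in_subtopology continuous_map_componentwise_UNIV
    by auto
  have vanish: "F p i = 0" if "i \<ge> 2" for p i
  proof -
    have "F p \<in> topspace (Euclidean_space 2)" using continuous_map_funspace[OF cF] by auto
    then show ?thesis using that by (simp add: topspace_Euclidean_space)
  qed
  define D where "D p = complex_of_real (F p 0 - F (act g0 p) 0) + \<i> * complex_of_real (F p 1 - F (act g0 p) 1)"
    for p
  have "continuous_on UNIV D"
    unfolding D_def by (intro continuous_intros comp continuous_on_compose2[OF comp continuous_on_deck_act]) auto
  moreover have "D p \<noteq> 0" for p
  proof
    assume "D p = 0"
    then have low: "F p i = F (act g0 p) i" if "i < 2" for i
      using that unfolding D_def complex_eq_iff by (auto simp: less_2_cases_iff)
    have "F p = F (act g0 p)"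
    proof
      fix i show "F p i = F (act g0 p) i"
        by (cases "i < 2") (simp_all add: low vanish)
    qed
    then show False using ne by blast
  qed
  moreover have "D (act g p) = (if \<phi> g = 0 then D p else - D p)" for g p
    using deck_act_lifted_sign[OF _ g0, of F g p] inv unfolding D_def by (auto simp: algebra_simps)
  ultimately show False
    using sign_changing_map_trivial_on_fibre[OF Delta] not_rho by blast
qed

lemma phi_eq_rho_if_trivial_on_fibre:
  assumes x: "\<phi> ((1, 0), 0) = 0" and y: "\<phi> ((0, 1), 0) = 0" and g0: "\<phi> g0 = 1"
  shows "\<phi> = (\<lambda>g. snd g mod 2)"
proof
  have "\<phi> ((0, 0), 1) = 1"
    using hom_Z2_eq[OF hom det, of g0] g0 x y phi_cases[of "((0, 0), 1)"] by auto
  then show "\<phi> g = snd g mod 2" for g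
    by (subst hom_Z2_eq[OF hom det]) (simp add: x y)
qed

end

section \<open>Upper bound\<close>

context torus_double_cover
begin

lemma not_BU_prop_if_odd_map:
  fixes F :: "(real \<times> real) \<times> real \<Rightarrow> real \<times> real \<times> real"
  assumes g0: "\<phi> g0 = 1" and k: "3 \<le> k" and cont: "continuous_on UNIV F" and nz: "\<And>p. F p \<noteq> 0"
    and odd: "\<And>g p. F (act g p) = (if \<phi> g = 0 then F p else - F p)"
  shows "\<not> BU_prop (double_cover a b c d \<phi>) \<tau> k"
proof -
  define Fv where "Fv p (i::nat) = (if i = 0 then fst (F p) else if i = 1 then fst (snd (F p))
      else if i = 2 then snd (snd (F p)) else 0)" for p i
  have comp: "continuous_map euclidean euclideanreal (\<lambda>p. Fv p i)" for i
    using cont unfolding Fv_def continuous_map_iff_continuous2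
    by (cases "i = 0"; cases "i = 1"; cases "i = 2") (auto intro!: continuous_on_fst continuous_on_snd)
  have Fv_k: "Fv = (\<lambda>p i. if i < k then Fv p i else 0)"
    using k unfolding Fv_def by (intro ext) auto
  have "continuous_map euclidean (Euclidean_space k) Fv"
    by (subst Fv_k) (rule continuous_map_componentwise_Euclidean_space[THEN iffD2], use comp in blast)
  moreover have "\<forall>g p. \<phi> g = 0 \<longrightarrow> Fv (act g p) = Fv p"
    by (intro allI impI ext) (simp add: Fv_def odd)
  moreover have "Fv p \<noteq> Fv (act g0 p)" for p
  proof
    assume eq: "Fv p = Fv (act g0 p)"
    from fun_cong[OF eq, of 0] fun_cong[OF eq, of 1] fun_cong[OF eq, of 2] have "F p = 0"
      by (simp add: odd g0 Fv_def prod_eq_iff)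
    with nz show False by blast
  qed
  ultimately show ?thesis unfolding BU_prop_iff_lifted[OF g0] by blast
qed

end

definition parity_sign :: "int \<Rightarrow> real" where
  "parity_sign j = (if even j then 1 else -1)"

lemma parity_sign_add: "parity_sign (i + j) = parity_sign i * parity_sign j"
  by (simp add: parity_sign_def)

lemma parity_sign_nonzero: "parity_sign j \<noteq> 0"
  by (simp add: parity_sign_def)

lemma parity_sign_eq: "even (i - j) \<Longrightarrow> parity_sign i = parity_sign j"
  by (simp add: parity_sign_def)

lemma parity_sign_mod_2: "parity_sign (j mod 2) = parity_sign j"
  by (simp add: parity_sign_def)

lemma cos_add_pi_int: "cos (x + pi * of_int j) = parity_sign j * cos x"
  by (simp add: cos_add parity_sign_def)

lemma sin_add_pi_int: "sin (x + pi * of_int j) = parity_sign j * sin x"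
  by (simp add: sin_add parity_sign_def)

text \<open>The point at angle \<open>L\<close> on the equator of \<open>S\<^sup>2\<close>, rotated by \<open>\<pi>t\<close> about the horizontal axis
  at angle \<open>B\<close>; at \<open>t = 1\<close> it is the reflection of the point in the axis.\<close>

definition equator_turn :: "real \<Rightarrow> real \<Rightarrow> real \<Rightarrow> real \<times> real \<times> real" where
  "equator_turn L B t = (cos (L - B) * cos B - sin (L - B) * cos (pi * t) * sin B,
                         cos (L - B) * sin B + sin (L - B) * cos (pi * t) * cos B,
                         sin (L - B) * sin (pi * t))"

lemma rotation_sum_squares:
  fixes x y cb sb ct st :: real
  assumes "cb\<^sup>2 + sb\<^sup>2 = 1" "ct\<^sup>2 + st\<^sup>2 = 1"
  shows "(x * cb - y * ct * sb)\<^sup>2 + (x * sb + y * ct * cb)\<^sup>2 + (y * st)\<^sup>2 = x\<^sup>2 + y\<^sup>2"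
proof -
  have "(x * cb - y * ct * sb)\<^sup>2 + (x * sb + y * ct * cb)\<^sup>2 + (y * st)\<^sup>2
     = x\<^sup>2 * (cb\<^sup>2 + sb\<^sup>2) + y\<^sup>2 * (ct\<^sup>2 * (cb\<^sup>2 + sb\<^sup>2) + st\<^sup>2)"
    by (simp add: power2_eq_square algebra_simps)
  with assms show ?thesis by simp
qed

lemma equator_turn_nonzero: "equator_turn L B t \<noteq> 0"
proof
  let ?u = "L - B"
  assume "equator_turn L B t = 0"
  then have zero: "cos ?u * cos B - sin ?u * cos (pi * t) * sin B = 0"
    "cos ?u * sin B + sin ?u * cos (pi * t) * cos B = 0" "sin ?u * sin (pi * t) = 0"
    by (simp_all add: equator_turn_def zero_prod_def)
  have "(cos ?u * cos B - sin ?u * cos (pi * t) * sin B)\<^sup>2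
      + (cos ?u * sin B + sin ?u * cos (pi * t) * cos B)\<^sup>2 + (sin ?u * sin (pi * t))\<^sup>2
    = (cos ?u)\<^sup>2 + (sin ?u)\<^sup>2"
    by (rule rotation_sum_squares) (simp_all add: add.commute)
  then show False unfolding zero by simp
qed

lemma equator_turn_shift:
  "equator_turn (L + pi * of_int j) (B + pi * of_int (2 * i)) t = parity_sign j *\<^sub>R equator_turn L B t"
proof -
  have diff: "L + pi * of_int j - (B + pi * of_int (2 * i)) = (L - B) + pi * of_int (j - 2 * i)"
    by (simp add: algebra_simps)
  have "parity_sign (j - 2 * i) = parity_sign j" "parity_sign (2 * i) = 1"
    by (simp_all add: parity_sign_def)
  then show ?thesis
    unfolding equator_turn_def diff cos_add_pi_int sin_add_pi_int by (simp add: algebra_simps)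
qed

lemma equator_turn_0: "equator_turn L B 0 = (cos L, sin L, 0)"
  using cos_add[of "L - B" B] sin_add[of "L - B" B] by (simp add: equator_turn_def algebra_simps)

lemma equator_turn_1: "equator_turn L B 1 = (cos (2 * B - L), sin (2 * B - L), 0)"
proof -
  have "2 * B - L = B - (L - B)" by simp
  then show ?thesis
    using cos_diff[of B "L - B"] sin_diff[of B "L - B"] by (simp add: equator_turn_def algebra_simps)
qed

lemma continuous_on_equator_turn:
  "continuous_on UNIV L \<Longrightarrow> continuous_on UNIV B \<Longrightarrow> continuous_on UNIV t \<Longrightarrow>
    continuous_on UNIV (\<lambda>x::'a::t2_space. equator_turn (L x) (B x) (t x))"
  unfolding equator_turn_def by (intro continuous_intros continuous_on_cos continuous_on_sin)

text \<open>Constant near both ends of \<open>[0, 1]\<close>, so that maps defined slab by slab glue continuously.\<close>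

definition ramp :: "real \<Rightarrow> real" where
  "ramp t = max 0 (min 1 (2 * t - 1/2))"

lemma continuous_on_ramp: "continuous_on UNIV ramp"
  unfolding ramp_def by (intro continuous_intros)

lemma continuous_on_UNIV_if_locally_eq:
  fixes F :: "'a::t2_space \<Rightarrow> 'b::topological_space"
  assumes "\<And>x. \<exists>S G. open S \<and> x \<in> S \<and> continuous_on S G \<and> (\<forall>y\<in>S. F y = G y)"
  shows "continuous_on UNIV F"
proof -
  have "isCont F x" for x
  proof -
    obtain S G where S: "open S" "x \<in> S" "continuous_on S G" "\<forall>y\<in>S. F y = G y"
      using assms by blast
    then have "continuous_on S F" using continuous_on_cong by force
    with S show "isCont F x" using continuous_on_eq_continuous_at by blast
  qed
  then show ?thesis by (simp add: continuous_at_imp_continuous_on)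
qed

locale monodromy_mod_4 =
  fixes a b c d k0 l0 \<gamma> :: int
  assumes det: "a * d - b * c = 1"
    and cong: "[a = -1] (mod 4)" "[b = 0] (mod 4)" "[c = 0] (mod 4)" "[d = -1] (mod 4)"
begin

lemma dvd_4: "4 dvd a + 1" "4 dvd b" "4 dvd c" "4 dvd d + 1"
  using cong by (simp_all add: cong_iff_dvd_diff)

lemma parity: "odd a" "even b" "even c" "odd d"
  using dvd_4 by presburger+

definition fibre_angle :: "real \<times> real \<Rightarrow> real" where
  "fibre_angle w = pi * (of_int k0 * fst w + of_int l0 * snd w)"

text \<open>The axis is chosen so that reflecting the angle of \<open>w\<close> in it gives the angle of \<open>\<Theta>\<^sup>-\<^sup>1 w\<close>
  shifted by \<open>\<pi>\<gamma>\<close>, see \<open>fibre_sphere_1\<close>; integrality of the shift under \<open>\<int>\<^sup>2\<close> is where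
  \<open>\<Theta> \<equiv> -I (mod 4)\<close> enters.\<close>

definition axis_angle :: "real \<times> real \<Rightarrow> real" where
  "axis_angle w = pi * of_int \<gamma> / 2
     + pi / 2 * (of_int (k0 * (d + 1) - l0 * b) * fst w + of_int (l0 * (a + 1) - k0 * c) * snd w)"

definition fibre_sphere :: "real \<Rightarrow> real \<times> real \<Rightarrow> real \<times> real \<times> real" where
  "fibre_sphere t w = equator_turn (fibre_angle w) (axis_angle w) t"

lemma fibre_sphere_shift:
  "fibre_sphere t (w + (of_int m1, of_int m2)) = parity_sign (k0 * m1 + l0 * m2) *\<^sub>R fibre_sphere t w"
proof -
  have "4 dvd k0 * (d + 1) - l0 * b" "4 dvd l0 * (a + 1) - k0 * c"
    using dvd_4 by (intro dvd_diff dvd_mult; simp)+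
  then obtain p0 q0 where p0: "k0 * (d + 1) - l0 * b = 4 * p0" and q0: "l0 * (a + 1) - k0 * c = 4 * q0"
    by (elim dvdE)
  have "fibre_angle (w + (of_int m1, of_int m2)) = fibre_angle w + pi * of_int (k0 * m1 + l0 * m2)"
    unfolding fibre_angle_def by (simp add: algebra_simps)
  moreover have "axis_angle (w + (of_int m1, of_int m2)) = axis_angle w + pi * of_int (2 * (p0 * m1 + q0 * m2))"
    unfolding axis_angle_def p0 q0 by (simp add: algebra_simps)
  ultimately show ?thesis unfolding fibre_sphere_def by (simp only: equator_turn_shift)
qed

lemma fibre_sphere_1: "fibre_sphere 1 w = parity_sign \<gamma> *\<^sub>R fibre_sphere 0 (thinv a b c d w)"
proof -
  have "2 * axis_angle w - fibre_angle w = fibre_angle (thinv a b c d w) + pi * of_int \<gamma>"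
    unfolding axis_angle_def fibre_angle_def thinv_def by (simp add: field_simps)
  then show ?thesis
    unfolding fibre_sphere_def equator_turn_0 equator_turn_1 by (simp add: cos_add_pi_int sin_add_pi_int)
qed

definition slab_map :: "int \<Rightarrow> (real \<times> real) \<times> real \<Rightarrow> real \<times> real \<times> real" where
  "slab_map n p = parity_sign (\<gamma> * n) *\<^sub>R fibre_sphere (ramp (snd p - of_int n)) (thpow a b c d (- n) (fst p))"

definition sphere_map :: "(real \<times> real) \<times> real \<Rightarrow> real \<times> real \<times> real" where
  "sphere_map p = slab_map \<lfloor>snd p\<rfloor> p"

lemma sphere_map_nonzero: "sphere_map p \<noteq> 0"
  by (simp add: sphere_map_def slab_map_def fibre_sphere_def parity_sign_nonzero equator_turn_nonzero)

lemma continuous_on_slab_map: "continuous_on UNIV (slab_map n)"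
proof -
  have "continuous_on UNIV (\<lambda>p::(real \<times> real) \<times> real. thpow a b c d (- n) (fst p))"
    by (rule continuous_on_compose2[OF continuous_on_thpow]) (auto intro: continuous_intros)
  moreover have "continuous_on UNIV (\<lambda>p::(real \<times> real) \<times> real. ramp (snd p - of_int n))"
    by (rule continuous_on_compose2[OF continuous_on_ramp])
       (auto intro!: continuous_on_diff continuous_on_snd continuous_on_const continuous_on_id)
  ultimately show ?thesis
    unfolding slab_map_def fibre_sphere_def fibre_angle_def axis_angle_def
    by (intro continuous_intros continuous_on_equator_turn)
qed

lemma sphere_map_eq_slab_map:
  assumes "of_int n - 1/4 < snd p" "snd p < of_int n + 1"
  shows "sphere_map p = slab_map n p"
proof (cases "of_int n \<le> snd p")
  case True
  with assms have "\<lfloor>snd p\<rfloor> = n" by (intro floor_unique) auto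
  then show ?thesis by (simp add: sphere_map_def)
next
  case False
  with assms have "\<lfloor>snd p\<rfloor> = n - 1" by (intro floor_unique) auto
  moreover have "ramp (snd p - of_int (n - 1)) = 1" "ramp (snd p - of_int n) = 0"
    using assms False unfolding ramp_def by auto
  moreover have "thinv a b c d (thpow a b c d (- (n - 1)) (fst p)) = thpow a b c d (- n) (fst p)"
    using thpow_pred[OF det, of "- (n - 1)" "fst p"] by simp
  moreover have "parity_sign (\<gamma> * (n - 1)) * parity_sign \<gamma> = parity_sign (\<gamma> * n)"
    by (simp add: parity_sign_add[symmetric] algebra_simps)
  ultimately show ?thesis by (simp add: sphere_map_def slab_map_def fibre_sphere_1)
qed

lemma continuous_on_sphere_map: "continuous_on UNIV sphere_map"
proof (rule continuous_on_UNIV_if_locally_eq)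
  fix x :: "(real \<times> real) \<times> real"
  let ?n = "\<lfloor>snd x\<rfloor>"
  let ?S = "{p. of_int ?n - 1/4 < snd p \<and> snd p < (of_int ?n + 1 :: real)}"
  have "open ?S" by (intro open_Collect_conj open_Collect_less continuous_intros)
  moreover have "x \<in> ?S" by simp linarith
  ultimately show "\<exists>S G. open S \<and> x \<in> S \<and> continuous_on S G \<and> (\<forall>y\<in>S. sphere_map y = G y)"
    using continuous_on_subset[OF continuous_on_slab_map[of ?n] subset_UNIV] sphere_map_eq_slab_map[of ?n]
    by blast
qed

lemma sphere_map_deck_act:
  "sphere_map (deck_act a b c d ((m1, m2), j) p) = parity_sign (k0 * m1 + l0 * m2 + \<gamma> * j) *\<^sub>R sphere_map p"
proof -
  obtain v s where p: "p = (v, s)" by (cases p)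
  define n where "n = \<lfloor>s\<rfloor>"
  obtain m1' m2' where m': "thpow a b c d (- (n + j)) (m1, m2) = (m1', m2')"
    by (cases "thpow a b c d (- (n + j)) (m1, m2)")
  have "thpow a b c d (- (n + j)) (thpow a b c d j v + (of_int m1, of_int m2))
      = thpow a b c d (- n) v + (of_int m1', of_int m2')"
    using thpow_of_int[OF det, of "- (n + j)" "(m1, m2)"] m'
    by (simp add: thpow_vec_add[OF det] flip: thpow_add[OF det])
  moreover have "\<lfloor>s + of_int j\<rfloor> = n + j" unfolding n_def by simp
  ultimately have "sphere_map (deck_act a b c d ((m1, m2), j) p)
      = parity_sign (\<gamma> * (n + j)) *\<^sub>R fibre_sphere (ramp (s - of_int n)) (thpow a b c d (- n) v + (of_int m1', of_int m2'))"
    by (simp add: p deck_act_def sphere_map_def slab_map_def)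
  also have "\<dots> = (parity_sign (\<gamma> * (n + j)) * parity_sign (k0 * m1' + l0 * m2'))
      *\<^sub>R fibre_sphere (ramp (s - of_int n)) (thpow a b c d (- n) v)"
    by (simp add: fibre_sphere_shift)
  also have "parity_sign (k0 * m1' + l0 * m2') = parity_sign (k0 * m1 + l0 * m2)"
  proof (rule parity_sign_eq)
    have "even (m1' - m1)" "even (m2' - m2)"
      using thpow_cong_mod2[OF det parity, of "- (n + j)" "(m1, m2)"] m' by simp_all
    moreover have "(k0 * m1' + l0 * m2') - (k0 * m1 + l0 * m2) = k0 * (m1' - m1) + l0 * (m2' - m2)"
      by (simp add: algebra_simps)
    ultimately show "even ((k0 * m1' + l0 * m2') - (k0 * m1 + l0 * m2))" by simp
  qed
  finally show ?thesis
    by (simp add: p n_def sphere_map_def slab_map_def distrib_left parity_sign_add algebra_simps)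
qed

end

context torus_double_cover
begin

lemma not_BU_prop_ge_3:
  assumes g0: "\<phi> g0 = 1"
    and cong: "[a = -1] (mod 4)" "[b = 0] (mod 4)" "[c = 0] (mod 4)" "[d = -1] (mod 4)"
    and k: "3 \<le> k"
  shows "\<not> BU_prop (double_cover a b c d \<phi>) \<tau> k"
proof -
  interpret S: monodromy_mod_4 a b c d "\<phi> ((1, 0), 0)" "\<phi> ((0, 1), 0)" "\<phi> ((0, 0), 1)"
    using det cong by unfold_locales
  have "S.sphere_map (act g p) = (if \<phi> g = 0 then S.sphere_map p else - S.sphere_map p)" for g p
  proof -
    obtain m1 m2 j where g: "g = ((m1, m2), j)" by (metis prod.collapse)
    have "\<phi> g = (\<phi> ((1, 0), 0) * m1 + \<phi> ((0, 1), 0) * m2 + \<phi> ((0, 0), 1) * j) mod 2"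
      using hom_Z2_eq[OF hom det, of g] by (simp add: g algebra_simps)
    then have "parity_sign (\<phi> ((1, 0), 0) * m1 + \<phi> ((0, 1), 0) * m2 + \<phi> ((0, 0), 1) * j)
        = parity_sign (\<phi> g)"
      by (simp add: parity_sign_mod_2)
    also have "\<dots> = (if \<phi> g = 0 then 1 else -1)"
      using phi_cases[of g] by (auto simp: parity_sign_def)
    finally show ?thesis by (simp add: g S.sphere_map_deck_act)
  qed
  then show ?thesis
    by (rule not_BU_prop_if_odd_map[OF g0 k S.continuous_on_sphere_map S.sphere_map_nonzero])
qed

end

theorem mainTheorem4:
  fixes a b c d :: int and \<phi> :: "(int \<times> int) \<times> int \<Rightarrow> int"
  assumes det1: "a * d - b * c = 1"
    and hyperbolic: "\<And>z::complex. z\<^sup>2 - of_int (a + d) * z + of_int (a * d - b * c) = 0 \<Longrightarrow> cmod z \<noteq> 1"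
    and Delta1: "[(a - 1) * (d - 1) - b * c = 4] (mod 8)"
    and congI: "[a = -1] (mod 4)" "[b = 0] (mod 4)" "[c = 0] (mod 4)" "[d = -1] (mod 4)"
    and epi: "\<phi> \<in> epi (pi_grp a b c d) Z2"
    and not_rho: "\<phi> \<noteq> (\<lambda>g. snd g mod 2)"
  shows "BU_torus a b c d \<phi> = 2"
proof -
  have hom: "\<phi> \<in> hom (pi_grp a b c d) Z2" using epi unfolding epi_def by blast
  interpret torus_double_cover a b c d \<phi> using det1 hom by unfold_locales
  have "1 \<in> \<phi> ` carrier (pi_grp a b c d)"
    using epi by (simp add: epi_def carrier_integer_mod_group)
  then obtain g0 where g0: "\<phi> g0 = 1" by auto
  have Delta: "(a - 1) * (d - 1) - b * c \<noteq> 0"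
    using Delta1 by (auto simp: cong_def)
  have fibre: "\<phi> ((1, 0), 0) \<noteq> 0 \<or> \<phi> ((0, 1), 0) \<noteq> 0"
    using phi_eq_rho_if_trivial_on_fibre[OF _ _ g0] not_rho by blast
  show ?thesis
    unfolding BU_torus_def BU_index_def
  proof (rule Greatest_equality)
    show "BU_prop (double_cover a b c d \<phi>) \<tau> 2" by (rule BU_prop_2[OF g0 Delta fibre])
    show "k \<le> 2" if "BU_prop (double_cover a b c d \<phi>) \<tau> k" for k
      using not_BU_prop_ge_3[OF g0 congI, of k] that by linarith
  qed
qed

end
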